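(* Let $G$ be either the line network $L_n$ with $n\ge 2$ or the ring network $C_n$ with $n\ge 3$. Suppose a group-testing measurement matrix $A$ for $G$ (in the sense defined in the context) distinguishes all binary vectors $x\in\{0,1\}^n$ having at most two ones, meaning that distinct such vectors produce distinct outcome vectors. Then $A$ has at least $n$ rows.
   Context: The line network $L_n$ on nodes $\{1,\dots,n\}$ has edges $\{i,i+1\}$ for $1\le i\le n-1$. The ring network $C_n$ additionally has the edge $\{n,1\}$. A group-testing measurement matrix for a graph $G$ on $\{1,\dots,n\}$ is a matrix $A\in\{0,1\}^{m\times n}$ in which every nonzero row has a support that induces a connected subgraph of $G$. Given $x\in\{0,1\}^n$, the outcome of row $i$ is the Boolean OR $\bigvee_{j:A_{ij}=1}x_j$. *)

theory Defs
  imports Main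
begin

text \<open>Graphs on the node set {1..n}, given by a set of undirected edges (2-element sets).\<close>

definition line_edges :: "nat \<Rightarrow> nat set set" where
  "line_edges n = {{i, i+1} | i. 1 \<le> i \<and> i \<le> n - 1}"

definition ring_edges :: "nat \<Rightarrow> nat set set" where
  "ring_edges n = line_edges n \<union> {{n, 1}}"

definition induces_connected :: "nat set set \<Rightarrow> nat set \<Rightarrow> bool" where
  "induces_connected E S \<longleftrightarrow>
     (\<forall>u\<in>S. \<forall>v\<in>S. (u, v) \<in> ({(a, b). a \<in> S \<and> b \<in> S \<and> {a, b} \<in> E})\<^sup>*)"

text \<open>A matrix with m rows over columns {1..n}: row i (i < m) has entries A i j, j \<in> {1..n}.\<close>
definition row_support :: "(nat \<Rightarrow> nat \<Rightarrow> bool) \<Rightarrow> nat \<Rightarrow> nat \<Rightarrow> nat set" where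
  "row_support A n i = {j \<in> {1..n}. A i j}"

definition gt_matrix :: "nat \<Rightarrow> nat set set \<Rightarrow> nat \<Rightarrow> (nat \<Rightarrow> nat \<Rightarrow> bool) \<Rightarrow> bool" where
  "gt_matrix n E m A \<longleftrightarrow>
     (\<forall>i<m. row_support A n i \<noteq> {} \<longrightarrow> induces_connected E (row_support A n i))"

text \<open>Binary vectors in {0,1}^n, represented by their support (subset of {1..n}).\<close>
definition outcome :: "(nat \<Rightarrow> nat \<Rightarrow> bool) \<Rightarrow> nat \<Rightarrow> nat \<Rightarrow> nat set \<Rightarrow> nat \<Rightarrow> bool" where
  "outcome A n m X = (\<lambda>i. i < m \<and> (\<exists>j\<in>{1..n}. A i j \<and> j \<in> X))"

definition distinguishes_2 :: "nat \<Rightarrow> nat \<Rightarrow> (nat \<Rightarrow> nat \<Rightarrow> bool) \<Rightarrow> bool" where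
  "distinguishes_2 n m A \<longleftrightarrow>
     (\<forall>X Y. X \<subseteq> {1..n} \<and> card X \<le> 2 \<and> Y \<subseteq> {1..n} \<and> card Y \<le> 2 \<and> X \<noteq> Y
        \<longrightarrow> outcome A n m X \<noteq> outcome A n m Y)"

end

theory Submission
  imports Defs
begin

(* Call a row a separator for a node j with successor s if its support
   contains s but not j.  Testing the vectors supported on {j} and {j, s} (or on {}
   and {s}) against each other shows that every such pair has a separator.  For the
   line take j = 0, ..., n-1 with s = j+1; for the ring take j = 1, ..., n with
   s = j+1 resp. s = 1 for j = n.  No row can separate two different nodes j < k:
   its support is connected, avoids j and k and contains j+1, so it is trapped in the
   open interval (j, k), where all edges join consecutive integers; but it also
   contains the successor of k, which lies outside (j, k).  Hence the separators of
   the n nodes are n distinct rows. *)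

lemma connected_trapped_in_interval:
  assumes conn: "induces_connected E S"
    and "j \<notin> S" "k \<notin> S" "a \<in> S" "j < a" "a < k"
    and local_edges: "\<And>x y. j < x \<Longrightarrow> x < k \<Longrightarrow> {x, y} \<in> E \<Longrightarrow> y = x + 1 \<or> y + 1 = x"
  shows "S \<subseteq> {j<..<k}"
proof
  fix b assume "b \<in> S"
  let ?R = "{(a, b). a \<in> S \<and> b \<in> S \<and> {a, b} \<in> E}"
  have "(a, b) \<in> ?R\<^sup>*" using conn \<open>a \<in> S\<close> \<open>b \<in> S\<close> unfolding induces_connected_def by blast
  then show "b \<in> {j<..<k}"
  proof (induction rule: rtrancl_induct)
    case base then show ?case using assms by simp
  next
    case (step y z)
    then have "z \<in> S" "{y, z} \<in> E" "j < y" "y < k" by auto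
    then have "z = y + 1 \<or> z + 1 = y" using local_edges by blast
    moreover have "z \<noteq> j" "z \<noteq> k" using \<open>z \<in> S\<close> assms(2,3) by auto
    ultimately show ?case using \<open>j < y\<close> \<open>y < k\<close> by auto
  qed
qed

lemma line_edge_consecutive:
  assumes "{x, y} \<in> line_edges n"
  shows "y = x + 1 \<or> y + 1 = x"
  using assms unfolding line_edges_def by (auto simp: doubleton_eq_iff)

lemma ring_edge_consecutive:
  assumes "{x, y} \<in> ring_edges n" "1 < x" "x < n"
  shows "y = x + 1 \<or> y + 1 = x"
  using assms unfolding ring_edges_def line_edges_def by (auto simp: doubleton_eq_iff)

lemma separating_row:
  assumes dist: "distinguishes_2 n m A" and gt: "gt_matrix n E m A"
    and "s \<in> {1..n}" "s \<noteq> j"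
  shows "\<exists>i<m. s \<in> row_support A n i \<and> j \<notin> row_support A n i
           \<and> induces_connected E (row_support A n i)"
proof -
  define X where "X = {1..n} \<inter> {j}"
  have "finite X" "card X \<le> 1" unfolding X_def by (auto simp: card_le_Suc0_iff_eq)
  then have "card (insert s X) \<le> 2" by (simp add: card_insert_if)
  moreover have "X \<noteq> insert s X" "insert s X \<subseteq> {1..n}" "X \<subseteq> {1..n}" "card X \<le> 2"
    using assms(3,4) \<open>card X \<le> 1\<close> unfolding X_def by auto
  ultimately have "outcome A n m X \<noteq> outcome A n m (insert s X)"
    using dist unfolding distinguishes_2_def by blast
  then obtain i where "outcome A n m X i \<noteq> outcome A n m (insert s X) i" by blast
  then have i: "i < m" "A i s" "\<not> (\<exists>x\<in>{1..n}. A i x \<and> x \<in> X)"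
    unfolding outcome_def using assms(3) by auto
  then have "s \<in> row_support A n i" "j \<notin> row_support A n i"
    using assms(3) unfolding row_support_def X_def by auto
  moreover then have "induces_connected E (row_support A n i)"
    using gt i(1) unfolding gt_matrix_def by auto
  ultimately show ?thesis using i(1) by blast
qed

lemma rows_ge_card_of_separations:
  fixes J :: "nat set" and succ :: "nat \<Rightarrow> nat"
  assumes dist: "distinguishes_2 n m A" and gt: "gt_matrix n E m A"
    and succ: "\<And>j. j \<in> J \<Longrightarrow> succ j \<in> {1..n} \<and> succ j \<noteq> j"
    and no_common_separator: "\<And>S j k. induces_connected E S \<Longrightarrow> j \<in> J \<Longrightarrow> k \<in> J \<Longrightarrow> j < k
           \<Longrightarrow> succ j \<in> S \<Longrightarrow> succ k \<in> S \<Longrightarrow> j \<notin> S \<Longrightarrow> k \<notin> S \<Longrightarrow> False"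
  shows "card J \<le> m"
proof -
  obtain f where f: "\<And>j. j \<in> J \<Longrightarrow> f j < m \<and> succ j \<in> row_support A n (f j)
      \<and> j \<notin> row_support A n (f j) \<and> induces_connected E (row_support A n (f j))"
  proof -
    have "\<forall>j\<in>J. \<exists>i. i < m \<and> succ j \<in> row_support A n i \<and> j \<notin> row_support A n i
        \<and> induces_connected E (row_support A n i)"
      using separating_row[OF dist gt] succ by blast
    then show ?thesis using that by metis
  qed
  have "inj_on f J"
  proof (rule inj_onI, rule ccontr)
    fix j k assume "j \<in> J" "k \<in> J" "f j = f k" "j \<noteq> k"
    then show False
      using f[of j] f[of k] no_common_separator[of "row_support A n (f j)" j k]
        no_common_separator[of "row_support A n (f j)" k j] by (metis linorder_neqE_nat)
  qed
  moreover have "f ` J \<subseteq> {..<m}" using f by auto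
  ultimately show ?thesis using card_inj_on_le[of f J "{..<m}"] by simp
qed

lemma line_no_common_separator:
  assumes "induces_connected (line_edges n) S" "j < k"
    "j + 1 \<in> S" "k + 1 \<in> S" "j \<notin> S" "k \<notin> S"
  shows False
proof -
  have "j + 1 \<noteq> k" using assms by auto
  then have "S \<subseteq> {j<..<k}"
    using connected_trapped_in_interval[OF assms(1,5,6,3)] line_edge_consecutive assms(2) by auto
  then show False using \<open>k + 1 \<in> S\<close> by auto
qed

definition ring_succ :: "nat \<Rightarrow> nat \<Rightarrow> nat" where
  "ring_succ n j = (if j = n then 1 else j + 1)"

lemma ring_no_common_separator:
  assumes "induces_connected (ring_edges n) S" "1 \<le> j" "j < k" "k \<le> n"
    "ring_succ n j \<in> S" "ring_succ n k \<in> S" "j \<notin> S" "k \<notin> S"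
  shows False
proof -
  have succ_j: "ring_succ n j = j + 1" using assms(3,4) by (simp add: ring_succ_def)
  then have "j + 1 \<noteq> k" using assms(5,8) by auto
  then have "S \<subseteq> {j<..<k}"
    using connected_trapped_in_interval[OF assms(1,7,8), of "j + 1"] ring_edge_consecutive
      assms(2-5) succ_j by fastforce
  moreover have "ring_succ n k \<notin> {j<..<k}" using assms(2) by (simp add: ring_succ_def)
  ultimately show False using assms(6) by blast
qed

theorem mainTheorem2:
  fixes n m :: nat and A :: "nat \<Rightarrow> nat \<Rightarrow> bool" and E :: "nat set set"
  assumes "(E = line_edges n \<and> n \<ge> 2) \<or> (E = ring_edges n \<and> n \<ge> 3)"
    and "gt_matrix n E m A"
    and "distinguishes_2 n m A"
  shows "m \<ge> n"
  using assms(1)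
proof
  assume "E = line_edges n \<and> n \<ge> 2"
  then have "card {0..<n} \<le> m"
    using rows_ge_card_of_separations[OF assms(3,2), of "{0..<n}" Suc]
      line_no_common_separator[of n] by auto
  then show ?thesis by simp
next
  assume ring: "E = ring_edges n \<and> n \<ge> 3"
  have "card {1..n} \<le> m"
  proof (rule rows_ge_card_of_separations[OF assms(3,2), of "{1..n}" "ring_succ n"])
    show "ring_succ n j \<in> {1..n} \<and> ring_succ n j \<noteq> j" if "j \<in> {1..n}" for j
      using that ring by (auto simp: ring_succ_def)
  qed (use ring ring_no_common_separator[of n] in auto)
  then show ?thesis by simp
qed

end
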